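(* Let $V=\mathbb{C}^n$ be the defining representation of $GL_n(\mathbb{C})$ and $k_1,\dots,k_m\ge 0$. Let $\mu=(\mu_1,\dots,\mu_\ell)$ be a partition of $k_1+\dots+k_m$ with at most $n$ parts. Then the dimension of the space of $S_n$-invariants in the symmetrized weight space $(\mathrm{Sym}^{k_1}(V)\otimes\dots\otimes\mathrm{Sym}^{k_m}(V))_{\bar\mu}$ equals the number of multiset partitions of $\{1^{k_1},2^{k_2},\dots,m^{k_m}\}$ with parts of sizes $\mu_1,\dots,\mu_\ell$. In particular, the dimension of the space of $S_n$-invariants in $\mathrm{Sym}^{k_1}(V)\otimes\dots\otimes\mathrm{Sym}^{k_m}(V)$ equals the number of multiset partitions of $\{1^{k_1},2^{k_2},\dots,m^{k_m}\}$ with at most $n$ parts.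
   Context: $S_n\subset GL_n(\mathbb{C})$ is the subgroup of permutation matrices and $T$ the diagonal torus. For a representation $W$ of $GL_n$ and a weight $\mu$ of $T$ (here $\mu$ is padded with zeros to length $n$), the symmetrized weight space $W_{\bar\mu}$ is the direct sum of the $T$-weight spaces of $W$ for all weights in the $S_n$-orbit of $\mu$; it is stable under $S_n$. A multiset partition of a multiset $M$ is a multiset of nonempty sub-multisets (parts) of $M$ whose multiplicities add up to those of $M$; the size of a part is its cardinality counted with multiplicity. $\{1^{k_1},\dots,m^{k_m}\}$ is the multiset containing $i$ with multiplicity $k_i$. *)

theory Defs
  imports Complex_Main "HOL-Library.Function_Algebras" "HOL-Library.Multiset"
    "HOL-Combinatorics.Permutations"
begin

text \<open>Variables x_{j,i} (j < m block index, i < n coordinate index).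
  Sym^{k_1}(V) \<otimes> ... \<otimes> Sym^{k_m}(V) is the space of polynomials in the x_{j,i}
  that are homogeneous of degree k_j in block j; it has the basis of monomials,
  encoded by exponent functions e j i.  A vector is a complex-valued function on
  exponent functions that vanishes off the set of admissible monomials.\<close>

definition monoms :: "nat \<Rightarrow> nat list \<Rightarrow> (nat \<Rightarrow> nat \<Rightarrow> nat) set" where
  "monoms n ks = {e. (\<forall>j i. (length ks \<le> j \<or> n \<le> i) \<longrightarrow> e j i = 0) \<and>
                     (\<forall>j < length ks. (\<Sum>i<n. e j i) = ks ! j)}"

definition tensor_sym :: "nat \<Rightarrow> nat list \<Rightarrow> ((nat \<Rightarrow> nat \<Rightarrow> nat) \<Rightarrow> complex) set" where
  "tensor_sym n ks = {f. \<forall>e. e \<notin> monoms n ks \<longrightarrow> f e = 0}"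

text \<open>T-weight of a monomial: t = diag(t_0,...,t_{n-1}) acts on x_{j,i} by t_i.\<close>
definition mweight :: "nat list \<Rightarrow> (nat \<Rightarrow> nat \<Rightarrow> nat) \<Rightarrow> (nat \<Rightarrow> nat)" where
  "mweight ks e = (\<lambda>i. \<Sum>j<length ks. e j i)"

definition pad :: "nat list \<Rightarrow> nat \<Rightarrow> nat" where
  "pad \<mu> = (\<lambda>i. if i < length \<mu> then \<mu> ! i else 0)"

definition weight_orbit :: "nat \<Rightarrow> (nat \<Rightarrow> nat) \<Rightarrow> (nat \<Rightarrow> nat) set" where
  "weight_orbit n w = {w \<circ> \<sigma> | \<sigma>. \<sigma> permutes {..<n}}"

definition sym_weight_space ::
  "nat \<Rightarrow> nat list \<Rightarrow> nat list \<Rightarrow> ((nat \<Rightarrow> nat \<Rightarrow> nat) \<Rightarrow> complex) set" where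
  "sym_weight_space n ks \<mu> = {f \<in> tensor_sym n ks.
      \<forall>e. f e \<noteq> 0 \<longrightarrow> mweight ks e \<in> weight_orbit n (pad \<mu>)}"

text \<open>Action of a permutation matrix: x_{j,i} \<mapsto> x_{j,\<sigma> i} on monomials.\<close>
definition perm_act ::
  "(nat \<Rightarrow> nat) \<Rightarrow> ((nat \<Rightarrow> nat \<Rightarrow> nat) \<Rightarrow> complex) \<Rightarrow> ((nat \<Rightarrow> nat \<Rightarrow> nat) \<Rightarrow> complex)" where
  "perm_act \<sigma> f = (\<lambda>e. f (\<lambda>j i. e j (\<sigma> i)))"

definition Sn_invariants ::
  "nat \<Rightarrow> ((nat \<Rightarrow> nat \<Rightarrow> nat) \<Rightarrow> complex) set \<Rightarrow> ((nat \<Rightarrow> nat \<Rightarrow> nat) \<Rightarrow> complex) set" where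
  "Sn_invariants n W = {f \<in> W. \<forall>\<sigma>. \<sigma> permutes {..<n} \<longrightarrow> perm_act \<sigma> f = f}"

definition cdim :: "('a \<Rightarrow> complex) set \<Rightarrow> nat" where
  "cdim W = vector_space.dim (\<lambda>c f. (\<lambda>x. c * f x)) W"

definition base_mset :: "nat list \<Rightarrow> nat multiset" where
  "base_mset ks = (\<Sum>j<length ks. replicate_mset (ks ! j) (j + 1))"

definition is_mset_partition :: "nat multiset multiset \<Rightarrow> nat multiset \<Rightarrow> bool" where
  "is_mset_partition P M \<longleftrightarrow> {#} \<notin># P \<and> sum_mset P = M"

definition is_partition :: "nat list \<Rightarrow> bool" where
  "is_partition \<mu> \<longleftrightarrow> sorted_wrt (\<ge>) \<mu> \<and> (\<forall>x\<in>set \<mu>. 0 < x)"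

end

theory Submission
  imports Defs "HOL-Library.Indicator_Function"
begin

text \<open>A monomial is an exponent matrix e, with e j i the exponent of x_{j,i}, and S_n acts on
  the monomial basis by permuting the n columns. So the S_n-invariants of an S_n-stable span of
  monomials have the orbit indicators as a basis, and their dimension is the number of orbits.
  Reading column i as the multiset containing j+1 with multiplicity e j i, the nonempty columns
  form a multiset partition of {1^k_1, ..., m^k_m} into at most n parts; this partition is a
  complete invariant of the orbit, and every such partition occurs. The T-weight of e is the
  vector of column sizes, so the orbit lies in the symmetrized weight space of \<mu> exactly when
  the part sizes are \<mu>.\<close>

interpretation cfun: vector_space "(\<lambda>c f x. c * f x) :: complex \<Rightarrow> ('a \<Rightarrow> complex) \<Rightarrow> 'a \<Rightarrow> complex"
  by unfold_locales (auto simp: algebra_simps fun_eq_iff)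

lemma sum_fun_apply: "(\<Sum>a\<in>A. f a) x = (\<Sum>a\<in>A. f a x)"
  by (induction A rule: infinite_finite_induct) auto

lemma independent_fibre_indicators:
  fixes \<Phi> :: "'a \<Rightarrow> 'b"
  assumes "finite S"
  shows "cfun.independent ((\<lambda>P. indicator (S \<inter> \<Phi> -` {P}) :: 'a \<Rightarrow> complex) ` \<Phi> ` S)"
    (is "cfun.independent ?B")
proof (rule cfun.independent_if_scalars_zero)
  show fin: "finite ?B" using assms by simp
  fix c v assume sum_eq_0: "(\<Sum>w\<in>?B. (\<lambda>x. c w * w x)) = 0" and "v \<in> ?B"
  then obtain y where y: "y \<in> S" "v = indicator (S \<inter> \<Phi> -` {\<Phi> y})" by auto
  have "0 = (\<Sum>w\<in>?B. (\<lambda>x. c w * w x)) y"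
    using sum_eq_0 by simp
  also have "\<dots> = (\<Sum>w\<in>?B. c w * w y)"
    by (rule sum_fun_apply)
  also have "\<dots> = (\<Sum>w\<in>?B. if w = v then c w else 0)"
    using y by (intro sum.cong) (auto simp: indicator_def)
  also have "\<dots> = c v"
    using \<open>v \<in> ?B\<close> fin by simp
  finally show "c v = 0" by simp
qed

lemma cdim_invariant_functions_eq_card_orbits:
  fixes S :: "'a set" and G :: "('a \<Rightarrow> 'a) set" and \<Phi> :: "'a \<Rightarrow> 'b"
  assumes "finite S"
    and stable: "\<And>g x. g \<in> G \<Longrightarrow> g x \<in> S \<longleftrightarrow> x \<in> S"
    and invariant: "\<And>g x. g \<in> G \<Longrightarrow> x \<in> S \<Longrightarrow> \<Phi> (g x) = \<Phi> x"
    and complete: "\<And>x y. x \<in> S \<Longrightarrow> y \<in> S \<Longrightarrow> \<Phi> x = \<Phi> y \<Longrightarrow> \<exists>g\<in>G. y = g x"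
  shows "cdim {f. (\<forall>x. x \<notin> S \<longrightarrow> f x = 0) \<and> (\<forall>g\<in>G. f \<circ> g = f)} = card (\<Phi> ` S)"
proof -
  let ?W = "{f :: 'a \<Rightarrow> complex. (\<forall>x. x \<notin> S \<longrightarrow> f x = 0) \<and> (\<forall>g\<in>G. f \<circ> g = f)}"
  define fibre where "fibre P = (indicator (S \<inter> \<Phi> -` {P}) :: 'a \<Rightarrow> complex)" for P
  have "inj_on fibre (\<Phi> ` S)"
  proof (rule inj_onI)
    fix P Q assume "P \<in> \<Phi> ` S" and eq: "fibre P = fibre Q"
    then obtain x where "x \<in> S" "P = \<Phi> x" by auto
    then have "fibre P x = 1" by (simp add: fibre_def)
    then have "fibre Q x = 1" by (simp add: eq)
    then show "P = Q" using \<open>P = \<Phi> x\<close> by (simp add: fibre_def indicator_eq_1_iff)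
  qed
  then have card_basis: "card (fibre ` \<Phi> ` S) = card (\<Phi> ` S)"
    by (rule card_image)
  have "fibre P \<in> ?W" for P
  proof -
    have "g x \<in> S \<inter> \<Phi> -` {P} \<longleftrightarrow> x \<in> S \<inter> \<Phi> -` {P}" if "g \<in> G" for g x
      using stable[OF that] invariant[OF that] by auto
    then show ?thesis by (auto simp: fibre_def fun_eq_iff indicator_def)
  qed
  then have "fibre ` \<Phi> ` S \<subseteq> ?W" by blast
  moreover have "?W \<subseteq> cfun.span (fibre ` \<Phi> ` S)"
  proof
    fix f assume f: "f \<in> ?W"
    have fibre_const: "f y = f x" if xy: "x \<in> S" "y \<in> S" "\<Phi> x = \<Phi> y" for x y
    proof -
      obtain g where "g \<in> G" "y = g x" using complete[OF xy] by blast
      then have "f \<circ> g = f" using f by blast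
      then show ?thesis using \<open>y = g x\<close> by (metis comp_apply)
    qed
    have "f = (\<Sum>P\<in>\<Phi> ` S. (\<lambda>x. f (inv_into S \<Phi> P) * fibre P x))"
    proof
      fix x
      have "(\<Sum>P\<in>\<Phi> ` S. (\<lambda>x. f (inv_into S \<Phi> P) * fibre P x)) x =
            (\<Sum>P\<in>\<Phi> ` S. if x \<in> S \<and> P = \<Phi> x then f (inv_into S \<Phi> P) else 0)"
        unfolding sum_fun_apply by (intro sum.cong) (auto simp: fibre_def)
      also have "\<dots> = f x"
      proof (cases "x \<in> S")
        case True
        then show ?thesis
          using \<open>finite S\<close> fibre_const[of "inv_into S \<Phi> (\<Phi> x)" x]
          by (simp add: inv_into_into f_inv_into_f)
      qed (use f in auto)
      finally show "f x = (\<Sum>P\<in>\<Phi> ` S. (\<lambda>x. f (inv_into S \<Phi> P) * fibre P x)) x" ..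
    qed
    also have "\<dots> \<in> cfun.span (fibre ` \<Phi> ` S)"
      by (intro cfun.span_sum cfun.span_scale cfun.span_base) auto
    finally show "f \<in> cfun.span (fibre ` \<Phi> ` S)" .
  qed
  moreover have "cfun.independent (fibre ` \<Phi> ` S)"
    unfolding fibre_def by (rule independent_fibre_indicators[OF \<open>finite S\<close>])
  ultimately have "card (fibre ` \<Phi> ` S) = cfun.dim ?W"
    by (rule cfun.basis_card_eq_dim)
  then show ?thesis
    by (simp add: cdim_def card_basis)
qed

lemma multiset_eq_if_filter_neq_eq:
  assumes "size M = size N" and "filter_mset (\<lambda>x. x \<noteq> z) M = filter_mset (\<lambda>x. x \<noteq> z) N"
  shows "M = N"
proof -
  have split: "A = filter_mset (\<lambda>x. x \<noteq> z) A + replicate_mset (count A z) z" for A :: "'a multiset"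
    by (metis (mono_tags, lifting) filter_eq_replicate_mset filter_mset_cong multiset_partition)
  then have "size A = size (filter_mset (\<lambda>x. x \<noteq> z) A) + count A z" for A :: "'a multiset"
    by (metis size_replicate_mset size_union)
  then have "count M z = count N z" using assms by (metis add_left_cancel)
  then show ?thesis using split[of M] split[of N] assms(2) by simp
qed

lemma sum_mset_filter_nonzero: "sum_mset (filter_mset (\<lambda>x. x \<noteq> 0) M) = sum_mset M"
  by (induction M) auto

lemma count_sum_list: "count (sum_list ps) x = (\<Sum>i<length ps. count (ps ! i) x)"
  by (simp add: sum_list_sum_nth count_sum atLeast0LessThan)

lemma image_mset_lessThan_eq_padded:
  assumes "length xs \<le> n" and "\<And>i. i < n \<Longrightarrow> f i = (if i < length xs then xs ! i else z)"
  shows "image_mset f (mset_set {..<n}) = mset xs + replicate_mset (n - length xs) z"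
proof -
  have "map f [0..<n] = xs @ replicate (n - length xs) z"
    using assms by (intro nth_equalityI) (auto simp: nth_append)
  then show ?thesis
    by (metis mset_set_upto_eq_mset_upto mset_map mset_append mset_replicate)
qed

lemma weight_orbit_iff_image_mset_eq:
  assumes "\<forall>i\<ge>n. w i = 0" and "\<forall>i\<ge>n. v i = 0"
  shows "w \<in> weight_orbit n v \<longleftrightarrow> image_mset w (mset_set {..<n}) = image_mset v (mset_set {..<n})"
proof
  assume "w \<in> weight_orbit n v"
  then obtain \<sigma> where "\<sigma> permutes {..<n}" and "w = v \<circ> \<sigma>"
    by (auto simp: weight_orbit_def)
  then show "image_mset w (mset_set {..<n}) = image_mset v (mset_set {..<n})"
    by (intro permutes_implies_image_mset_eq[symmetric]) auto
next
  assume "image_mset w (mset_set {..<n}) = image_mset v (mset_set {..<n})"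
  then obtain \<sigma> where \<sigma>: "\<sigma> permutes {..<n}" and eq: "\<forall>i\<in>{..<n}. w i = v (\<sigma> i)"
    by (rule image_mset_eq_implies_permutes[OF finite_lessThan])
  have "w i = v (\<sigma> i)" for i
    using eq assms permutes_not_in[OF \<sigma>, of i] by (cases "i < n") auto
  then have "w = v \<circ> \<sigma>" by auto
  with \<sigma> show "w \<in> weight_orbit n v"
    by (auto simp: weight_orbit_def)
qed

definition permute_monomial :: "(nat \<Rightarrow> nat) \<Rightarrow> (nat \<Rightarrow> nat \<Rightarrow> nat) \<Rightarrow> nat \<Rightarrow> nat \<Rightarrow> nat" where
  "permute_monomial \<sigma> e = (\<lambda>j i. e j (\<sigma> i))"

lemma perm_act_eq_comp: "perm_act \<sigma> f = f \<circ> permute_monomial \<sigma>"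
  by (simp add: perm_act_def permute_monomial_def comp_def)

lemma monoms_eq_0: "e \<in> monoms n ks \<Longrightarrow> length ks \<le> j \<or> n \<le> i \<Longrightarrow> e j i = 0"
  by (auto simp: monoms_def)

lemma finite_monoms: "finite (monoms n ks)"
proof -
  define F where "F = {g :: nat \<Rightarrow> nat. \<forall>i. (i \<in> {..<n} \<longrightarrow> g i \<in> {..sum_list ks}) \<and> (i \<notin> {..<n} \<longrightarrow> g i = 0)}"
  have "finite F" unfolding F_def by (rule finite_set_of_finite_funs) auto
  have "e j \<in> F" if e: "e \<in> monoms n ks" and j: "j < length ks" for e j
  proof -
    have "e j i \<le> sum_list ks" if "i < n" for i
    proof -
      have "e j i \<le> (\<Sum>i<n. e j i)" using that by (intro member_le_sum) auto
      also have "\<dots> = ks ! j" using e j by (simp add: monoms_def)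
      also have "\<dots> \<le> sum_list ks" using j by (simp add: elem_le_sum_list)
      finally show ?thesis .
    qed
    then show ?thesis unfolding F_def using monoms_eq_0[OF e] by auto
  qed
  then have "monoms n ks \<subseteq> {e. \<forall>j. (j \<in> {..<length ks} \<longrightarrow> e j \<in> F) \<and> (j \<notin> {..<length ks} \<longrightarrow> e j = (\<lambda>_. 0))}"
    using monoms_eq_0 by fastforce
  moreover have "finite {e. \<forall>j. (j \<in> {..<length ks} \<longrightarrow> e j \<in> F) \<and> (j \<notin> {..<length ks} \<longrightarrow> e j = (\<lambda>_. 0))}"
    by (rule finite_set_of_finite_funs) (auto simp: \<open>finite F\<close>)
  ultimately show ?thesis by (rule finite_subset)
qed

lemma permute_monomial_in_monoms:
  assumes "\<sigma> permutes {..<n}" and "e \<in> monoms n ks"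
  shows "permute_monomial \<sigma> e \<in> monoms n ks"
  unfolding monoms_def
proof (intro CollectI conjI allI impI)
  fix j i assume "length ks \<le> j \<or> n \<le> i"
  then show "permute_monomial \<sigma> e j i = 0"
    using assms monoms_eq_0 by (auto simp: permute_monomial_def permutes_not_in)
next
  fix j assume "j < length ks"
  have "(\<Sum>i<n. permute_monomial \<sigma> e j i) = (\<Sum>i<n. e j i)"
    using sum.permute[OF assms(1), of "e j"] by (simp add: permute_monomial_def comp_def)
  then show "(\<Sum>i<n. permute_monomial \<sigma> e j i) = ks ! j"
    using assms(2) \<open>j < length ks\<close> by (simp add: monoms_def)
qed

lemma permute_monomial_in_monoms_iff:
  assumes "\<sigma> permutes {..<n}"
  shows "permute_monomial \<sigma> e \<in> monoms n ks \<longleftrightarrow> e \<in> monoms n ks"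
proof
  assume "permute_monomial \<sigma> e \<in> monoms n ks"
  then have "permute_monomial (inv \<sigma>) (permute_monomial \<sigma> e) \<in> monoms n ks"
    by (rule permute_monomial_in_monoms[OF permutes_inv[OF assms]])
  then show "e \<in> monoms n ks"
    using assms by (simp add: permute_monomial_def permutes_inverses)
qed (rule permute_monomial_in_monoms[OF assms])

definition column :: "nat list \<Rightarrow> (nat \<Rightarrow> nat \<Rightarrow> nat) \<Rightarrow> nat \<Rightarrow> nat multiset" where
  "column ks e i = (\<Sum>j<length ks. replicate_mset (e j i) (j + 1))"

definition columns :: "nat \<Rightarrow> nat list \<Rightarrow> (nat \<Rightarrow> nat \<Rightarrow> nat) \<Rightarrow> nat multiset multiset" where
  "columns n ks e = image_mset (column ks e) (mset_set {..<n})"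

definition column_partition :: "nat \<Rightarrow> nat list \<Rightarrow> (nat \<Rightarrow> nat \<Rightarrow> nat) \<Rightarrow> nat multiset multiset" where
  "column_partition n ks e = filter_mset (\<lambda>c. c \<noteq> {#}) (columns n ks e)"

lemma count_column:
  "count (column ks e i) x = (if 0 < x \<and> x \<le> length ks then e (x - 1) i else 0)"
proof -
  have "count (column ks e i) x = (\<Sum>j<length ks. if j = x - 1 \<and> 0 < x then e j i else 0)"
    unfolding column_def count_sum by (intro sum.cong) auto
  then show ?thesis by (cases "0 < x") (auto simp: sum.delta)
qed

lemma count_base_mset:
  "count (base_mset ks) x = (if 0 < x \<and> x \<le> length ks then ks ! (x - 1) else 0)"
proof -
  have "count (base_mset ks) x = (\<Sum>j<length ks. if j = x - 1 \<and> 0 < x then ks ! j else 0)"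
    unfolding base_mset_def count_sum by (intro sum.cong) auto
  then show ?thesis by (cases "0 < x") (auto simp: sum.delta)
qed

lemma size_column: "size (column ks e i) = mweight ks e i"
  by (simp add: column_def mweight_def)

lemma size_columns [simp]: "size (columns n ks e) = n"
  by (simp add: columns_def)

lemma column_partition_permute_monomial:
  assumes "\<sigma> permutes {..<n}"
  shows "column_partition n ks (permute_monomial \<sigma> e) = column_partition n ks e"
proof -
  have "columns n ks e = columns n ks (permute_monomial \<sigma> e)"
    unfolding columns_def using assms
    by (intro permutes_implies_image_mset_eq) (auto simp: column_def permute_monomial_def)
  then show ?thesis by (simp add: column_partition_def)
qed

lemma column_partition_eq_imp_permute_monomial:
  assumes e: "e \<in> monoms n ks" and e': "e' \<in> monoms n ks"
    and eq: "column_partition n ks e = column_partition n ks e'"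
  obtains \<sigma> where "\<sigma> permutes {..<n}" and "e' = permute_monomial \<sigma> e"
proof -
  have "filter_mset (\<lambda>c. c \<noteq> {#}) (columns n ks e') = filter_mset (\<lambda>c. c \<noteq> {#}) (columns n ks e)"
    using eq by (simp add: column_partition_def)
  then have "columns n ks e' = columns n ks e"
    by (rule multiset_eq_if_filter_neq_eq[rotated]) simp
  then obtain \<sigma> where \<sigma>: "\<sigma> permutes {..<n}" and col: "\<forall>i\<in>{..<n}. column ks e' i = column ks e (\<sigma> i)"
    unfolding columns_def by (rule image_mset_eq_implies_permutes[OF finite_lessThan])
  have "e' j i = e j (\<sigma> i)" for j i
  proof (cases "i < n \<and> j < length ks")
    case True
    then have "count (column ks e' i) (j + 1) = count (column ks e (\<sigma> i)) (j + 1)"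
      using col by auto
    then show ?thesis using True by (simp add: count_column)
  next
    case False
    then consider "length ks \<le> j" | "n \<le> i" by linarith
    then show ?thesis
    proof cases
      case 1
      then show ?thesis using monoms_eq_0[OF e] monoms_eq_0[OF e'] by auto
    next
      case 2
      then show ?thesis using permutes_not_in[OF \<sigma>] monoms_eq_0[OF e] monoms_eq_0[OF e'] by auto
    qed
  qed
  then have "e' = permute_monomial \<sigma> e" by (auto simp: permute_monomial_def)
  with \<sigma> show thesis by (rule that)
qed

lemma sum_mset_columns:
  assumes "e \<in> monoms n ks"
  shows "sum_mset (columns n ks e) = base_mset ks"
proof (rule multiset_eqI)
  fix x
  have "count (sum_mset (columns n ks e)) x = (\<Sum>i<n. count (column ks e i) x)"
    unfolding columns_def sum_unfold_sum_mset[symmetric] count_sum ..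
  also have "\<dots> = (if 0 < x \<and> x \<le> length ks then (\<Sum>i<n. e (x - 1) i) else 0)"
    by (simp add: count_column)
  also have "\<dots> = count (base_mset ks) x"
    using assms by (auto simp: count_base_mset monoms_def)
  finally show "count (sum_mset (columns n ks e)) x = count (base_mset ks) x" .
qed

lemma column_partition_is_mset_partition:
  "e \<in> monoms n ks \<Longrightarrow> is_mset_partition (column_partition n ks e) (base_mset ks)"
  by (simp add: is_mset_partition_def column_partition_def sum_mset_filter_nonzero sum_mset_columns)

lemma size_column_partition_le: "size (column_partition n ks e) \<le> n"
  by (metis column_partition_def size_columns size_filter_mset_lesseq)

definition parts_monomial :: "nat list \<Rightarrow> nat multiset list \<Rightarrow> nat \<Rightarrow> nat \<Rightarrow> nat" where
  "parts_monomial ks ps j i = (if i < length ps \<and> j < length ks then count (ps ! i) (j + 1) else 0)"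

lemma column_parts_monomial:
  assumes "sum_list ps = base_mset ks"
  shows "column ks (parts_monomial ks ps) i = (if i < length ps then ps ! i else {#})"
proof (rule multiset_eqI)
  fix x
  have "count (ps ! i) x \<le> count (base_mset ks) x" if "i < length ps"
    unfolding assms[symmetric] count_sum_list using that by (intro member_le_sum) auto
  then show "count (column ks (parts_monomial ks ps) i) x = count (if i < length ps then ps ! i else {#}) x"
    by (auto simp: count_column parts_monomial_def count_base_mset)
qed

lemma parts_monomial_in_monoms:
  assumes "sum_list ps = base_mset ks" and "length ps \<le> n"
  shows "parts_monomial ks ps \<in> monoms n ks"
  unfolding monoms_def
proof (intro CollectI conjI allI impI)
  fix j i assume "length ks \<le> j \<or> n \<le> i"
  then show "parts_monomial ks ps j i = 0" using assms(2) by (auto simp: parts_monomial_def)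
next
  fix j assume j: "j < length ks"
  have "(\<Sum>i<n. parts_monomial ks ps j i) = (\<Sum>i<length ps. count (ps ! i) (j + 1))"
    using assms(2) j by (intro sum.mono_neutral_cong_right) (auto simp: parts_monomial_def)
  also have "\<dots> = count (sum_list ps) (j + 1)"
    by (simp add: count_sum_list)
  also have "\<dots> = ks ! j"
    using j by (simp add: assms(1) count_base_mset)
  finally show "(\<Sum>i<n. parts_monomial ks ps j i) = ks ! j" .
qed

lemma mset_partition_eq_column_partition:
  assumes P: "is_mset_partition P (base_mset ks)" and "size P \<le> n"
  obtains e where "e \<in> monoms n ks" and "column_partition n ks e = P"
proof -
  obtain ps where ps: "mset ps = P" using ex_mset by blast
  have "sum_list ps = base_mset ks" and "length ps \<le> n"
    using assms ps by (auto simp: is_mset_partition_def sum_mset_sum_list[symmetric])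
  have "columns n ks (parts_monomial ks ps) = P + replicate_mset (n - length ps) {#}"
    unfolding columns_def ps[symmetric]
    using \<open>length ps \<le> n\<close> column_parts_monomial[OF \<open>sum_list ps = _\<close>]
    by (intro image_mset_lessThan_eq_padded) simp_all
  moreover have "filter_mset (\<lambda>c. c \<noteq> {#}) P = P"
    using P by (auto simp: is_mset_partition_def filter_mset_eq_conv)
  ultimately have "column_partition n ks (parts_monomial ks ps) = P"
    by (simp add: column_partition_def filter_mset_eq_mempty_iff)
  with parts_monomial_in_monoms[OF \<open>sum_list ps = _\<close> \<open>length ps \<le> n\<close>] show thesis
    by (rule that)
qed

lemma image_mset_size_column_partition:
  "image_mset size (column_partition n ks e) =
     filter_mset (\<lambda>k. k \<noteq> 0) (image_mset (mweight ks e) (mset_set {..<n}))"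
proof -
  have "column_partition n ks e = filter_mset (\<lambda>c. size c \<noteq> 0) (columns n ks e)"
    unfolding column_partition_def by (intro filter_mset_cong) auto
  then have "image_mset size (column_partition n ks e) =
      filter_mset (\<lambda>k. k \<noteq> 0) (image_mset size (columns n ks e))"
    using image_mset_filter_mset_swap[of size "\<lambda>k. k \<noteq> 0" "columns n ks e"] by simp
  also have "image_mset size (columns n ks e) = image_mset (mweight ks e) (mset_set {..<n})"
    by (simp add: columns_def multiset.map_comp comp_def size_column)
  finally show ?thesis .
qed

lemma mweight_in_weight_orbit_iff:
  assumes "e \<in> monoms n ks" and "0 \<notin> set \<mu>" and "length \<mu> \<le> n"
  shows "mweight ks e \<in> weight_orbit n (pad \<mu>) \<longleftrightarrow> image_mset size (column_partition n ks e) = mset \<mu>"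
proof -
  let ?weights = "image_mset (mweight ks e) (mset_set {..<n})"
  let ?padded = "mset \<mu> + replicate_mset (n - length \<mu>) (0::nat)"
  have "image_mset (pad \<mu>) (mset_set {..<n}) = ?padded"
    using assms(3) by (intro image_mset_lessThan_eq_padded) (auto simp: pad_def)
  moreover have "\<forall>i\<ge>n. mweight ks e i = 0"
    using monoms_eq_0[OF assms(1)] by (simp add: mweight_def)
  moreover have "\<forall>i\<ge>n. pad \<mu> i = 0"
    using assms(3) by (simp add: pad_def)
  ultimately have "mweight ks e \<in> weight_orbit n (pad \<mu>) \<longleftrightarrow> ?weights = ?padded"
    by (simp add: weight_orbit_iff_image_mset_eq)
  also have "\<dots> \<longleftrightarrow> filter_mset (\<lambda>k. k \<noteq> 0) ?weights = mset \<mu>"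
  proof -
    have "filter_mset (\<lambda>k. k \<noteq> 0) (mset \<mu>) = mset \<mu>"
      using assms(2) by (induction \<mu>) auto
    then have filter_padded: "filter_mset (\<lambda>k. k \<noteq> 0) ?padded = mset \<mu>"
      by simp
    have "size ?weights = size ?padded"
      using assms(3) by simp
    then show ?thesis
      using filter_padded multiset_eq_if_filter_neq_eq[of ?weights ?padded 0] by auto
  qed
  finally show ?thesis
    by (simp add: image_mset_size_column_partition)
qed

lemma sym_weight_space_eq:
  assumes "0 \<notin> set \<mu>" and "length \<mu> \<le> n"
  shows "sym_weight_space n ks \<mu> =
    {f. \<forall>e. e \<notin> monoms n ks \<or> \<not> image_mset size (column_partition n ks e) = mset \<mu> \<longrightarrow> f e = 0}"
proof -
  have "mweight ks e \<in> weight_orbit n (pad \<mu>) \<longleftrightarrow> image_mset size (column_partition n ks e) = mset \<mu>"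
    if "e \<in> monoms n ks" for e
    using that assms by (rule mweight_in_weight_orbit_iff)
  then show ?thesis
    unfolding sym_weight_space_def tensor_sym_def by blast
qed

lemma cdim_Sn_invariants_eq_card_column_partitions:
  fixes Q :: "nat multiset multiset \<Rightarrow> bool"
  shows "cdim (Sn_invariants n {f. \<forall>e. e \<notin> monoms n ks \<or> \<not> Q (column_partition n ks e) \<longrightarrow> f e = 0})
         = card {P. is_mset_partition P (base_mset ks) \<and> size P \<le> n \<and> Q P}"
proof -
  define S where "S = {e \<in> monoms n ks. Q (column_partition n ks e)}"
  let ?G = "permute_monomial ` {\<sigma>. \<sigma> permutes {..<n}}"
  have "Sn_invariants n {f. \<forall>e. e \<notin> monoms n ks \<or> \<not> Q (column_partition n ks e) \<longrightarrow> f e = 0}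
        = {f. (\<forall>e. e \<notin> S \<longrightarrow> f e = 0) \<and> (\<forall>g\<in>?G. f \<circ> g = f)}"
    by (auto simp: Sn_invariants_def S_def perm_act_eq_comp)
  also have "cdim \<dots> = card (column_partition n ks ` S)"
  proof (rule cdim_invariant_functions_eq_card_orbits)
    show "finite S"
      using finite_monoms by (simp add: S_def)
    show "g e \<in> S \<longleftrightarrow> e \<in> S" if "g \<in> ?G" for g e
      using that by (auto simp: S_def permute_monomial_in_monoms_iff column_partition_permute_monomial)
    show "column_partition n ks (g e) = column_partition n ks e" if "g \<in> ?G" for g e
      using that by (auto simp: column_partition_permute_monomial)
    show "\<exists>g\<in>?G. e' = g e"
      if "e \<in> S" "e' \<in> S" and eq: "column_partition n ks e = column_partition n ks e'" for e e'
    proof -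
      have "e \<in> monoms n ks" "e' \<in> monoms n ks"
        using that by (auto simp: S_def)
      then obtain \<sigma> where "\<sigma> permutes {..<n}" "e' = permute_monomial \<sigma> e"
        using eq by (rule column_partition_eq_imp_permute_monomial)
      then show ?thesis by blast
    qed
  qed
  also have "column_partition n ks ` S = {P. is_mset_partition P (base_mset ks) \<and> size P \<le> n \<and> Q P}"
  proof
    show "column_partition n ks ` S \<subseteq> {P. is_mset_partition P (base_mset ks) \<and> size P \<le> n \<and> Q P}"
      by (auto simp: S_def column_partition_is_mset_partition size_column_partition_le)
    show "{P. is_mset_partition P (base_mset ks) \<and> size P \<le> n \<and> Q P} \<subseteq> column_partition n ks ` S"
      by (auto simp: S_def elim!: mset_partition_eq_column_partition)
  qed
  finally show ?thesis .
qed

theorem corollary3p12: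
  fixes n :: nat and ks :: "nat list"
  shows "(\<forall>\<mu> :: nat list. is_partition \<mu> \<and> sum_list \<mu> = sum_list ks \<and> length \<mu> \<le> n \<longrightarrow>
            cdim (Sn_invariants n (sym_weight_space n ks \<mu>)) =
            card {P. is_mset_partition P (base_mset ks) \<and> image_mset size P = mset \<mu>}) \<and>
         (cdim (Sn_invariants n (tensor_sym n ks)) =
            card {P. is_mset_partition P (base_mset ks) \<and> size P \<le> n})"
proof (intro conjI allI impI)
  fix \<mu> :: "nat list"
  assume "is_partition \<mu> \<and> sum_list \<mu> = sum_list ks \<and> length \<mu> \<le> n"
  then have "0 \<notin> set \<mu>" and "length \<mu> \<le> n"
    by (auto simp: is_partition_def)
  then have weight_space_eq: "sym_weight_space n ks \<mu> =
      {f. \<forall>e. e \<notin> monoms n ks \<or> \<not> image_mset size (column_partition n ks e) = mset \<mu> \<longrightarrow> f e = 0}"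
    by (rule sym_weight_space_eq)
  have partitions_eq: "{P. is_mset_partition P (base_mset ks) \<and> size P \<le> n \<and> image_mset size P = mset \<mu>} =
      {P. is_mset_partition P (base_mset ks) \<and> image_mset size P = mset \<mu>}"
    using \<open>length \<mu> \<le> n\<close> by (auto dest: arg_cong[of _ _ size])
  show "cdim (Sn_invariants n (sym_weight_space n ks \<mu>)) =
      card {P. is_mset_partition P (base_mset ks) \<and> image_mset size P = mset \<mu>}"
    unfolding weight_space_eq partitions_eq[symmetric]
    by (rule cdim_Sn_invariants_eq_card_column_partitions)
next
  show "cdim (Sn_invariants n (tensor_sym n ks)) =
      card {P. is_mset_partition P (base_mset ks) \<and> size P \<le> n}"
    using cdim_Sn_invariants_eq_card_column_partitions[of n ks "\<lambda>_. True"]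
    by (simp add: tensor_sym_def)
qed

end
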